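(* Let $\lambda$ be a dominant weight and let $\Gamma=(\beta_i)_{i\in I}$ be a $\lambda$-chain indexed by a totally ordered set $I=\{\overline{1}<\cdots<\overline{t}<1<2<\cdots<q<\overline{t+1}<\cdots<\overline{n}\}$. Assume that $\{\beta_1,\ldots,\beta_q\}$ is exactly the set of positive roots (without repetition) of a rank $2$ root subsystem $\overline{\Phi}\subseteq\Phi$. For $i\in I$ let $l_i:=|\{j\in I: j<i,\ \beta_j=\beta_i\}|$. Then the intersection of affine hyperplanes $\bigcap_{i=1}^q H_{\beta_i,-l_i}$ has codimension $2$ in $V$, and it coincides with $H_{\beta_1,-l_1}\cap H_{\beta_q,-l_q}$.
   Context: $\Phi$ is an irreducible (finite, crystallographic) root system of a complex simple Lie algebra, with positive roots $\Phi^+$, simple roots $\alpha_1,\dots,\alpha_r$ and $W$-invariant inner product $\langle\cdot,\cdot\rangle$ on the real span $V$ of $\Phi$; for $\alpha\in\Phi$, $\alpha^\vee:=2\alpha/\langle\alpha,\alpha\rangle$. A weight $\lambda$ is dominant if $\langle\lambda,\alpha^\vee\rangle\in\mathbb{Z}_{\ge0}$ for all $\alpha\in\Phi^+$. For $\alpha\in\Phi$, $k\in\mathbb{Z}$, let $H_{\alpha,k}=\{\mu\in V:\langle\mu,\alpha^\vee\rangle=k\}$. Alcoves are the connected components of $V\setminus\bigcup_{\alpha,k}H_{\alpha,k}$; the fundamental alcove is $A_\circ=\{\mu:0<\langle\mu,\alpha^\vee\rangle<1\ \forall\alpha\in\Phi^+\}$ and $A_{-\lambda}:=A_\circ-\lambda$.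 Two distinct alcoves $A,B$ are adjacent if they share a wall; we write $A\xrightarrow{\beta}B$ if the common wall lies in some $H_{\beta,k}$ and $\beta$ points from $A$ to $B$. A sequence of roots $(\beta_1,\dots,\beta_m)$ (here indexed by the ordered set $I$) is a $\lambda$-chain if $A_\circ=A_0\xrightarrow{-\beta_1}A_1\xrightarrow{-\beta_2}\cdots\xrightarrow{-\beta_m}A_m=A_{-\lambda}$ is an alcove path of minimal possible length between $A_\circ$ and $A_{-\lambda}$; its entries are positive roots. A rank $2$ root subsystem is a subset $\overline{\Phi}\subseteq\Phi$ which is itself a root system of rank $2$; its positive roots are $\overline{\Phi}^+=\overline{\Phi}\cap\Phi^+$. *)

theory Defs
  imports "HOL-Analysis.Analysis"
begin

definition coroot :: "'a::euclidean_space \<Rightarrow> 'a" where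
  "coroot \<alpha> = (2 / (\<alpha> \<bullet> \<alpha>)) *\<^sub>R \<alpha>"

definition refl :: "'a::euclidean_space \<Rightarrow> 'a \<Rightarrow> 'a" where
  "refl \<alpha> \<mu> = \<mu> - (\<mu> \<bullet> coroot \<alpha>) *\<^sub>R \<alpha>"

definition root_system :: "'a::euclidean_space set \<Rightarrow> bool" where
  "root_system R \<longleftrightarrow> finite R \<and> 0 \<notin> R \<and>
     (\<forall>\<alpha>\<in>R. \<forall>\<beta>\<in>R. refl \<alpha> \<beta> \<in> R) \<and>
     (\<forall>\<alpha>\<in>R. \<forall>\<beta>\<in>R. \<beta> \<bullet> coroot \<alpha> \<in> \<int>) \<and>
     (\<forall>\<alpha>\<in>R. \<forall>c::real. c *\<^sub>R \<alpha> \<in> R \<longrightarrow> c = 1 \<or> c = -1)"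

definition rank :: "'a::euclidean_space set \<Rightarrow> nat" where
  "rank R = dim (span R)"

definition irreducible_rs :: "'a::euclidean_space set \<Rightarrow> bool" where
  "irreducible_rs R \<longleftrightarrow> R \<noteq> {} \<and>
     \<not> (\<exists>R1 R2. R1 \<noteq> {} \<and> R2 \<noteq> {} \<and> R1 \<union> R2 = R \<and> R1 \<inter> R2 = {} \<and>
            (\<forall>\<alpha>\<in>R1. \<forall>\<beta>\<in>R2. \<alpha> \<bullet> \<beta> = 0))"

definition simple_roots :: "'a::euclidean_space set \<Rightarrow> 'a set \<Rightarrow> bool" where
  "simple_roots R \<Delta> \<longleftrightarrow> \<Delta> \<subseteq> R \<and> independent \<Delta> \<and>
     (\<forall>\<alpha>\<in>R. \<exists>c. (\<forall>\<delta>\<in>\<Delta>. c \<delta> \<in> \<int>) \<and>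
        ((\<forall>\<delta>\<in>\<Delta>. c \<delta> \<ge> 0) \<or> (\<forall>\<delta>\<in>\<Delta>. c \<delta> \<le> 0)) \<and>
        \<alpha> = (\<Sum>\<delta>\<in>\<Delta>. c \<delta> *\<^sub>R \<delta>))"

definition pos_roots :: "'a::euclidean_space set \<Rightarrow> 'a set \<Rightarrow> 'a set" where
  "pos_roots R \<Delta> = {\<alpha>\<in>R. \<exists>c. (\<forall>\<delta>\<in>\<Delta>. c \<delta> \<in> \<int> \<and> c \<delta> \<ge> 0) \<and>
                                \<alpha> = (\<Sum>\<delta>\<in>\<Delta>. c \<delta> *\<^sub>R \<delta>)}"

definition dominant :: "'a::euclidean_space set \<Rightarrow> 'a set \<Rightarrow> 'a \<Rightarrow> bool" where
  "dominant R \<Delta> lam \<longleftrightarrow> (\<forall>\<alpha>\<in>pos_roots R \<Delta>. lam \<bullet> coroot \<alpha> \<in> \<int> \<and> lam \<bullet> coroot \<alpha> \<ge> 0)"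

definition hyp :: "'a::euclidean_space \<Rightarrow> int \<Rightarrow> 'a set" where
  "hyp \<alpha> k = {\<mu>. \<mu> \<bullet> coroot \<alpha> = of_int k}"

definition alcoves :: "'a::euclidean_space set \<Rightarrow> 'a set set" where
  "alcoves R = components (UNIV - (\<Union>\<alpha>\<in>R. \<Union>k. hyp \<alpha> k))"

definition fund_alcove :: "'a::euclidean_space set \<Rightarrow> 'a set \<Rightarrow> 'a set" where
  "fund_alcove R \<Delta> = {\<mu>. \<forall>\<alpha>\<in>pos_roots R \<Delta>. 0 < \<mu> \<bullet> coroot \<alpha> \<and> \<mu> \<bullet> coroot \<alpha> < 1}"

definition common_wall_in :: "'a::euclidean_space set \<Rightarrow> 'a set \<Rightarrow> 'a \<Rightarrow> int \<Rightarrow> bool" where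
  "common_wall_in A B \<beta> k \<longleftrightarrow>
     (\<exists>p r. p \<in> hyp \<beta> k \<and> r > 0 \<and> hyp \<beta> k \<inter> ball p r \<subseteq> closure A \<inter> closure B)"

definition adjacent :: "'a::euclidean_space set \<Rightarrow> 'a set \<Rightarrow> 'a set \<Rightarrow> bool" where
  "adjacent R A B \<longleftrightarrow> A \<in> alcoves R \<and> B \<in> alcoves R \<and> A \<noteq> B \<and>
     (\<exists>\<beta>\<in>R. \<exists>k. common_wall_in A B \<beta> k)"

definition alcove_step :: "'a::euclidean_space set \<Rightarrow> 'a set \<Rightarrow> 'a \<Rightarrow> 'a set \<Rightarrow> bool" where
  "alcove_step R A \<beta> B \<longleftrightarrow> adjacent R A B \<and> \<beta> \<in> R \<and>
     (\<exists>k. common_wall_in A B \<beta> k \<and>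
          (\<forall>\<mu>\<in>A. \<mu> \<bullet> coroot \<beta> < of_int k) \<and> (\<forall>\<mu>\<in>B. \<mu> \<bullet> coroot \<beta> > of_int k))"

definition alcove_path :: "'a::euclidean_space set \<Rightarrow> (nat \<Rightarrow> 'a set) \<Rightarrow> nat \<Rightarrow> 'a set \<Rightarrow> 'a set \<Rightarrow> bool" where
  "alcove_path R As m A B \<longleftrightarrow> As 0 = A \<and> As m = B \<and> (\<forall>i<m. adjacent R (As i) (As (Suc i)))"

text \<open>A lambda-chain (beta_0,...,beta_{m-1}) (0-based indexing).\<close>
definition lambda_chain :: "'a::euclidean_space set \<Rightarrow> 'a set \<Rightarrow> 'a \<Rightarrow> (nat \<Rightarrow> 'a) \<Rightarrow> nat \<Rightarrow> bool" where
  "lambda_chain R \<Delta> lam \<beta> m \<longleftrightarrow>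
     (let A0 = fund_alcove R \<Delta>; Al = (\<lambda>\<mu>. \<mu> - lam) ` fund_alcove R \<Delta> in
       (\<exists>As. As 0 = A0 \<and> As m = Al \<and> (\<forall>i<m. alcove_step R (As i) (- \<beta> i) (As (Suc i)))) \<and>
       (\<forall>Bs m'. alcove_path R Bs m' A0 Al \<longrightarrow> m \<le> m'))"

definition lcount :: "(nat \<Rightarrow> 'a) \<Rightarrow> nat \<Rightarrow> nat" where
  "lcount \<beta> i = card {j. j < i \<and> \<beta> j = \<beta> i}"

end

theory Submission
  imports Defs
begin

text \<open>Let \<open>A\<^sub>0, \<dots>, A\<^sub>m\<close> be the alcoves of the chain and let the level of an alcove \<open>A\<close> at a
  root \<open>\<alpha>\<close> be the integer \<open>k\<close> with \<open>A\<close> between \<open>H\<^bsub>\<alpha>,k\<^esub>\<close> and \<open>H\<^bsub>\<alpha>,k+1\<^esub>\<close>.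
  Minimality forces the chain never to cross a hyperplane of a positive root in the positive
  direction: the levels start at \<open>0\<close> and end \<open>\<le> 0\<close>, so such a crossing would be followed
  or preceded by a crossing of the same hyperplane, and reflecting the stretch in between
  would shorten the path. Hence the level of \<open>A\<^sub>j\<close> at a positive root \<open>\<alpha>\<close> is minus the number
  of \<open>i < j\<close> with \<open>\<beta>\<^sub>i = \<alpha>\<close>. In the window \<open>1..q\<close> each positive root \<open>e\<close> of the rank two
  subsystem is crossed exactly once, at \<open>H\<^bsub>e,-l\<^sub>e\<^esub>\<close>, so the alcoves before and after the window
  lie just above, respectively just below, all these hyperplanes. In rank two this forces
  them through a common point: every positive root is reached from the two extreme rays of
  the positive cone by reflections that decrease a height function, and the strip condition
  makes the levels transform like the coroots. As \<open>\<beta>\<^sub>1\<close> and \<open>\<beta>\<^sub>q\<close> are not parallel and span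
  the subsystem, the intersection is that of their two hyperplanes.\<close>

definition orth_comp :: "'a::euclidean_space \<Rightarrow> 'a \<Rightarrow> 'a" where
  "orth_comp b x = x - ((b \<bullet> x) / (b \<bullet> b)) *\<^sub>R b"

lemma inner_orth_comp [simp]: "b \<bullet> orth_comp b x = 0"
  unfolding orth_comp_def by (rule vector_sub_project_orthogonal)

lemma orth_comp_inner_self: "orth_comp b x \<bullet> x = orth_comp b x \<bullet> orth_comp b x"
proof -
  have "x = orth_comp b x + ((b \<bullet> x) / (b \<bullet> b)) *\<^sub>R b"
    by (simp add: orth_comp_def)
  hence "orth_comp b x \<bullet> x = orth_comp b x \<bullet> orth_comp b x + ((b \<bullet> x) / (b \<bullet> b)) * (orth_comp b x \<bullet> b)"
    by (metis inner_add_right inner_scaleR_right)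
  thus ?thesis by (simp add: inner_commute)
qed

lemma orth_comp_nonzero: "\<forall>c. x \<noteq> c *\<^sub>R b \<Longrightarrow> orth_comp b x \<noteq> 0"
  unfolding orth_comp_def by (metis eq_iff_diff_eq_0)

lemma orth_comp_inner_pos: "\<forall>c. x \<noteq> c *\<^sub>R b \<Longrightarrow> orth_comp b x \<bullet> x > 0"
  by (metis orth_comp_nonzero orth_comp_inner_self inner_gt_zero_iff)

lemma hyperplane_ball_non_Ints:
  fixes u w p :: "'a::euclidean_space"
  assumes np: "\<forall>c. u \<noteq> c *\<^sub>R w" and r: "r > 0"
  obtains z where "z \<bullet> w = p \<bullet> w" "dist p z < r" "z \<bullet> u \<notin> \<int>"
proof -
  define d where "d = orth_comp w u"
  have dd: "d \<bullet> d > 0" and du: "d \<bullet> u = d \<bullet> d"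
    using orth_comp_inner_pos[OF np] orth_comp_inner_self unfolding d_def by auto
  obtain s where s: "0 < s" "s < r / norm d" "s < 1 / (d \<bullet> d)"
    using field_lbound_gt_zero[of "r / norm d" "1 / (d \<bullet> d)"] r dd by auto
  have "d \<bullet> w = 0"
    unfolding d_def using inner_orth_comp[of w u] by (simp add: inner_commute)
  hence on_hyp: "(p + t *\<^sub>R d) \<bullet> w = p \<bullet> w" for t
    by (simp add: inner_add_left)
  have near: "dist p (p + t *\<^sub>R d) < r" if "0 < t" "t \<le> s" for t
  proof -
    have "dist p (p + t *\<^sub>R d) = t * norm d"
      using that by (simp add: dist_norm)
    also have "\<dots> < r"
      using s that dd by (simp add: less_divide_eq) (smt (verit) mult_right_mono norm_ge_zero)
    finally show ?thesis .
  qed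
  have along: "(p + t *\<^sub>R d) \<bullet> u = p \<bullet> u + t * (d \<bullet> d)" for t
    by (simp add: inner_add_left du)
  have "(p + s *\<^sub>R d) \<bullet> u \<notin> \<int> \<or> (p + (s / 2) *\<^sub>R d) \<bullet> u \<notin> \<int>"
  proof (rule ccontr)
    assume "\<not> ?thesis"
    hence "(p + s *\<^sub>R d) \<bullet> u - (p + (s / 2) *\<^sub>R d) \<bullet> u \<in> \<int>"
      by (simp add: Ints_diff)
    hence "s * (d \<bullet> d) / 2 \<in> \<int>"
      unfolding along by simp
    moreover have "0 < s * (d \<bullet> d) / 2" "s * (d \<bullet> d) / 2 < 1"
      using s dd by (simp_all add: less_divide_eq)
    ultimately show False
      by (auto elim!: Ints_cases)
  qed
  moreover have "dist p (p + s *\<^sub>R d) < r" "dist p (p + (s / 2) *\<^sub>R d) < r"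
    using near s(1) by auto
  ultimately show thesis
    using that on_hyp by blast
qed

lemma coroot_uminus [simp]: "coroot (- a) = - coroot a"
  by (simp add: coroot_def)

lemma hyp_uminus [simp]: "hyp (- a) (- k) = hyp a k"
  by (auto simp: hyp_def)

lemma common_wall_in_uminus [simp]: "common_wall_in A B (- g) (- k) \<longleftrightarrow> common_wall_in A B g k"
  unfolding common_wall_in_def hyp_uminus ..

lemma inner_coroot_self: "(a::'a::euclidean_space) \<noteq> 0 \<Longrightarrow> a \<bullet> coroot a = 2"
  by (simp add: coroot_def)

lemma inner_coroot_eq_0_iff: "(\<mu> \<bullet> coroot a = 0) \<longleftrightarrow> \<mu> \<bullet> a = 0"
  by (cases "a = 0") (simp_all add: coroot_def)

lemma root_system_nonzero: "root_system R \<Longrightarrow> a \<in> R \<Longrightarrow> a \<noteq> 0"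
  unfolding root_system_def by blast

lemma root_system_scaleR: "root_system R \<Longrightarrow> a \<in> R \<Longrightarrow> c *\<^sub>R a \<in> R \<Longrightarrow> c = 1 \<or> c = -1"
  unfolding root_system_def by blast

lemma root_system_inner_coroot_Ints: "root_system R \<Longrightarrow> a \<in> R \<Longrightarrow> b \<in> R \<Longrightarrow> b \<bullet> coroot a \<in> \<int>"
  unfolding root_system_def by blast

lemma root_system_refl: "root_system R \<Longrightarrow> a \<in> R \<Longrightarrow> b \<in> R \<Longrightarrow> refl a b \<in> R"
  unfolding root_system_def by blast

lemma root_system_uminus:
  assumes "root_system R" "a \<in> R"
  shows "- a \<in> R"
proof -
  have "refl a a = - a"
    using root_system_nonzero[OF assms] by (simp add: refl_def inner_coroot_self scaleR_2)
  thus ?thesis using root_system_refl[OF assms assms(2)] by simp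
qed

lemma root_system_inner_coroot_pos:
  assumes "root_system R" "a \<in> R" "b \<in> R" "0 < a \<bullet> b"
  obtains k :: int where "a \<bullet> coroot b = of_int k" "0 < k"
proof -
  obtain k where k: "a \<bullet> coroot b = of_int k"
    using root_system_inner_coroot_Ints[OF assms(1,3,2)] by (auto elim: Ints_cases)
  moreover have "0 < a \<bullet> coroot b"
    using assms(4) root_system_nonzero[OF assms(1,3)] by (simp add: coroot_def)
  ultimately show thesis
    using that by simp
qed

lemma root_system_parallel:
  assumes "root_system R" "a \<in> R" "b \<in> R" "b \<noteq> a" "b \<noteq> - a"
  shows "b \<noteq> c *\<^sub>R a"
  using root_system_scaleR[OF assms(1,2), of c] assms(3-5) by auto

lemma pos_roots_or_uminus:
  assumes R: "root_system R" and sr: "simple_roots R D" and r: "\<rho> \<in> R"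
  shows "\<rho> \<in> pos_roots R D \<or> - \<rho> \<in> pos_roots R D"
proof -
  obtain c where c: "\<forall>\<delta>\<in>D. c \<delta> \<in> \<int>" "(\<forall>\<delta>\<in>D. c \<delta> \<ge> 0) \<or> (\<forall>\<delta>\<in>D. c \<delta> \<le> 0)"
    "\<rho> = (\<Sum>\<delta>\<in>D. c \<delta> *\<^sub>R \<delta>)"
    using sr r unfolding simple_roots_def by blast
  show ?thesis
  proof (cases "\<forall>\<delta>\<in>D. c \<delta> \<ge> 0")
    case True
    thus ?thesis using c r unfolding pos_roots_def by blast
  next
    case False
    have "- \<rho> = (\<Sum>\<delta>\<in>D. (- c \<delta>) *\<^sub>R \<delta>)"
      unfolding c(3) by (simp add: sum_negf)
    moreover have "\<forall>\<delta>\<in>D. - c \<delta> \<in> \<int> \<and> - c \<delta> \<ge> 0"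
      using c(1,2) False by auto
    ultimately have "- \<rho> \<in> pos_roots R D"
      using root_system_uminus[OF R r] unfolding pos_roots_def
      by (intro CollectI conjI exI[of _ "\<lambda>\<delta>. - c \<delta>"]) auto
    thus ?thesis ..
  qed
qed

lemma inner_refl_refl:
  assumes "r \<noteq> 0"
  shows "refl r v \<bullet> refl r v = v \<bullet> v"
proof -
  define c where "c = v \<bullet> coroot r"
  have c2: "c * (r \<bullet> r) = 2 * (v \<bullet> r)"
    unfolding c_def coroot_def using assms by simp
  have "refl r v \<bullet> refl r v = v \<bullet> v - 2 * c * (v \<bullet> r) + c * (c * (r \<bullet> r))"
    unfolding refl_def c_def[symmetric]
    by (simp add: inner_diff_left inner_diff_right inner_commute algebra_simps)
  thus ?thesis unfolding c2 by simp
qed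

lemma inner_coroot_refl:
  assumes "r \<noteq> 0" "g \<noteq> 0"
  shows "\<mu> \<bullet> coroot (refl r g) = \<mu> \<bullet> coroot g - (\<mu> \<bullet> coroot r) * (r \<bullet> coroot g)"
proof -
  have "\<mu> \<bullet> coroot (refl r g) = (2 / (g \<bullet> g)) * (\<mu> \<bullet> g - (g \<bullet> coroot r) * (\<mu> \<bullet> r))"
    unfolding coroot_def[of "refl r g"] inner_refl_refl[OF assms(1)]
    unfolding refl_def by (simp add: inner_diff_right)
  also have "\<dots> = \<mu> \<bullet> coroot g - (\<mu> \<bullet> coroot r) * (r \<bullet> coroot g)"
    unfolding coroot_def by (simp add: inner_commute algebra_simps)
  finally show ?thesis .
qed

section \<open>Levels of alcoves\<close>

text \<open>The point chosen by \<open>SOME\<close> is irrelevant for an alcove (\<open>alcove_level_floor\<close>).\<close>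
definition alcove_level :: "'a::euclidean_space set \<Rightarrow> 'a \<Rightarrow> int" where
  "alcove_level A g = \<lfloor>(SOME \<mu>. \<mu> \<in> A) \<bullet> coroot g\<rfloor>"

lemma alcove_nonempty: "A \<in> alcoves R \<Longrightarrow> A \<noteq> {}"
  unfolding alcoves_def using in_components_nonempty by blast

lemma alcove_inner_coroot_non_Ints:
  assumes "A \<in> alcoves R" "g \<in> R" "\<mu> \<in> A"
  shows "\<mu> \<bullet> coroot g \<notin> \<int>"
proof
  assume "\<mu> \<bullet> coroot g \<in> \<int>"
  then obtain k where "\<mu> \<in> hyp g k"
    by (auto simp: hyp_def elim: Ints_cases)
  thus False
    using assms in_components_subset unfolding alcoves_def by blast
qed

lemma alcove_floor_le:
  assumes A: "A \<in> alcoves R" and g: "g \<in> R" and xy: "x \<in> A" "y \<in> A"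
  shows "\<lfloor>x \<bullet> coroot g\<rfloor> \<le> \<lfloor>y \<bullet> coroot g\<rfloor>"
proof (rule ccontr)
  let ?k = "\<lfloor>x \<bullet> coroot g\<rfloor>"
  assume "\<not> ?thesis"
  hence "coroot g \<bullet> y \<le> of_int ?k" "of_int ?k \<le> coroot g \<bullet> x"
    by (simp_all add: inner_commute le_floor_iff)
  moreover have "connected A"
    using A in_components_connected unfolding alcoves_def by blast
  ultimately obtain z where "z \<in> A" "coroot g \<bullet> z = of_int ?k"
    using connected_ivt_hyperplane[of A y x "coroot g"] xy by blast
  thus False
    using alcove_inner_coroot_non_Ints[OF A g, of z] by (simp add: inner_commute)
qed

lemma alcove_level_floor:
  assumes "A \<in> alcoves R" "g \<in> R" "\<mu> \<in> A"
  shows "alcove_level A g = \<lfloor>\<mu> \<bullet> coroot g\<rfloor>"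
proof -
  have "(SOME \<mu>. \<mu> \<in> A) \<in> A"
    using assms(3) by (rule someI)
  thus ?thesis
    unfolding alcove_level_def
    using alcove_floor_le[OF assms(1,2)] assms(3) by (blast intro: order_antisym)
qed

lemma alcove_level_bounds:
  assumes "A \<in> alcoves R" "g \<in> R" "\<mu> \<in> A"
  shows "of_int (alcove_level A g) < \<mu> \<bullet> coroot g \<and> \<mu> \<bullet> coroot g < of_int (alcove_level A g) + 1"
proof -
  have "\<mu> \<bullet> coroot g \<noteq> of_int \<lfloor>\<mu> \<bullet> coroot g\<rfloor>"
    using alcove_inner_coroot_non_Ints[OF assms] by (metis Ints_of_int)
  thus ?thesis
    unfolding alcove_level_floor[OF assms]
    using of_int_floor_le[of "\<mu> \<bullet> coroot g"] real_of_int_floor_add_one_gt[of "\<mu> \<bullet> coroot g"] by linarith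
qed

lemma alcove_level_eqI:
  assumes "A \<in> alcoves R" "g \<in> R" "\<mu> \<in> A" "of_int n < \<mu> \<bullet> coroot g" "\<mu> \<bullet> coroot g < of_int n + 1"
  shows "alcove_level A g = n"
  using alcove_level_floor[OF assms(1-3)] assms(4,5) by (simp add: floor_eq_iff)

lemma alcove_level_closure:
  assumes "A \<in> alcoves R" "g \<in> R" "\<mu> \<in> closure A"
  shows "of_int (alcove_level A g) \<le> \<mu> \<bullet> coroot g \<and> \<mu> \<bullet> coroot g \<le> of_int (alcove_level A g) + 1"
proof -
  let ?S = "{\<mu>. of_int (alcove_level A g) \<le> \<mu> \<bullet> coroot g \<and> \<mu> \<bullet> coroot g \<le> of_int (alcove_level A g) + 1}"
  have "closed ?S"
    by (intro closed_Collect_conj closed_Collect_le continuous_intros)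
  moreover have "A \<subseteq> ?S"
    using alcove_level_bounds[OF assms(1,2)] by fastforce
  ultimately show ?thesis
    using assms(3) closure_minimal by blast
qed

lemma alcove_level_closure_floor:
  assumes "A \<in> alcoves R" "g \<in> R" "z \<in> closure A" "z \<bullet> coroot g \<notin> \<int>"
  shows "alcove_level A g = \<lfloor>z \<bullet> coroot g\<rfloor>"
proof -
  have "z \<bullet> coroot g \<noteq> of_int (alcove_level A g)" "z \<bullet> coroot g \<noteq> of_int (alcove_level A g + 1)"
    using assms(4) by (metis Ints_of_int)+
  hence "of_int (alcove_level A g) < z \<bullet> coroot g" "z \<bullet> coroot g < of_int (alcove_level A g) + 1"
    using alcove_level_closure[OF assms(1-3)] by auto
  thus ?thesis
    by (intro floor_unique[symmetric]) auto
qed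

lemma alcove_level_uminus:
  assumes R: "root_system R" and A: "A \<in> alcoves R" and g: "g \<in> R"
  shows "alcove_level A (- g) = - alcove_level A g - 1"
proof -
  obtain a where a: "a \<in> A"
    using alcove_nonempty[OF A] by blast
  show ?thesis
    using alcove_level_bounds[OF A g a]
    by (intro alcove_level_eqI[OF A root_system_uminus[OF R g] a]) auto
qed

text \<open>An alcove is cut out by its levels: it is the component of the complement of all
  hyperplanes that contains the (convex) intersection of the corresponding open strips.\<close>
lemma alcove_eqI:
  assumes A: "A \<in> alcoves R" and B: "B \<in> alcoves R"
    and eq: "\<And>g. g \<in> R \<Longrightarrow> alcove_level A g = alcove_level B g"
  shows "A = B"
proof -
  let ?S = "UNIV - (\<Union>\<alpha>\<in>R. \<Union>k. hyp \<alpha> k)"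
  define Box where "Box = (\<Inter>g\<in>R. {\<mu>. coroot g \<bullet> \<mu> > of_int (alcove_level A g)}
    \<inter> {\<mu>. coroot g \<bullet> \<mu> < of_int (alcove_level A g) + 1})"
  have "connected Box"
    unfolding Box_def
    by (intro convex_connected convex_INT ballI convex_Int convex_halfspace_lt convex_halfspace_gt)
  moreover have "Box \<subseteq> ?S"
  proof
    fix \<mu> assume \<mu>: "\<mu> \<in> Box"
    have False if "a \<in> R" "\<mu> \<in> hyp a k" for a k
    proof -
      have "of_int (alcove_level A a) < (of_int k::real)" "(of_int k::real) < of_int (alcove_level A a) + 1"
        using \<mu> that unfolding Box_def by (auto simp: hyp_def inner_commute)
      hence "alcove_level A a < k" "k < alcove_level A a + 1"
        by linarith+
      thus False by linarith
    qed
    thus "\<mu> \<in> ?S" by blast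
  qed
  moreover have "A \<subseteq> Box" "B \<subseteq> Box"
    using alcove_level_bounds[OF A] alcove_level_bounds[OF B] eq
    unfolding Box_def by (auto simp: inner_commute)
  moreover have "Box = C" if "C \<in> alcoves R" "C \<subseteq> Box" "connected Box" "Box \<subseteq> ?S" for C
    using that alcove_nonempty[of C R] unfolding alcoves_def in_components_maximal by blast
  ultimately have "Box = A" "Box = B"
    using A B by blast+
  thus ?thesis by simp
qed

lemma common_wall_in_sym: "common_wall_in A B g k \<Longrightarrow> common_wall_in B A g k"
  unfolding common_wall_in_def by blast

lemma common_wall_level_bounds:
  assumes A: "A \<in> alcoves R" and g: "g \<in> R" and w: "common_wall_in A B g k"
  shows "k - 1 \<le> alcove_level A g \<and> alcove_level A g \<le> k"
proof -
  obtain p r where "p \<in> hyp g k" "r > 0" "hyp g k \<inter> ball p r \<subseteq> closure A \<inter> closure B"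
    using w unfolding common_wall_in_def by blast
  hence "p \<in> closure A" "p \<bullet> coroot g = of_int k"
    by (auto simp: hyp_def)
  hence "of_int (alcove_level A g) \<le> (of_int k :: real)" "(of_int k :: real) \<le> of_int (alcove_level A g) + 1"
    using alcove_level_closure[OF A g \<open>p \<in> closure A\<close>] by auto
  thus ?thesis by linarith
qed

text \<open>Crossing a wall in \<open>H\<^bsub>d,c\<^esub>\<close> changes no level except those at \<open>\<plusminus>d\<close>: near a
  generic point of the wall the closures of both alcoves share a point off every hyperplane
  of a root not parallel to \<open>d\<close>.\<close>
lemma common_wall_level_eq:
  assumes R: "root_system R" and A: "A \<in> alcoves R" and B: "B \<in> alcoves R"
    and g: "g \<in> R" and w: "common_wall_in A B d c" and np: "\<forall>t. g \<noteq> t *\<^sub>R d"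
  shows "alcove_level A g = alcove_level B g"
proof -
  obtain p r where p: "p \<in> hyp d c" and r: "r > 0"
    and sub: "hyp d c \<inter> ball p r \<subseteq> closure A \<inter> closure B"
    using w unfolding common_wall_in_def by blast
  have "\<forall>t. coroot g \<noteq> t *\<^sub>R d"
  proof (intro allI notI)
    fix t assume "coroot g = t *\<^sub>R d"
    hence "((g \<bullet> g) / 2) *\<^sub>R coroot g = ((g \<bullet> g) / 2 * t) *\<^sub>R d"
      by simp
    moreover have "((g \<bullet> g) / 2) *\<^sub>R coroot g = g"
      using root_system_nonzero[OF R g] by (simp add: coroot_def)
    ultimately show False
      using np by metis
  qed
  then obtain z where z: "z \<bullet> d = p \<bullet> d" "dist p z < r" "z \<bullet> coroot g \<notin> \<int>"
    using hyperplane_ball_non_Ints r by blast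
  have "z \<in> hyp d c"
    using p z(1) by (simp add: hyp_def coroot_def)
  hence "z \<in> closure A" "z \<in> closure B"
    using sub z(2) by auto
  thus ?thesis
    using alcove_level_closure_floor[OF A g _ z(3)] alcove_level_closure_floor[OF B g _ z(3)] by simp
qed

lemma common_wall_alcove_eqI:
  assumes R: "root_system R" and A: "A \<in> alcoves R" and B: "B \<in> alcoves R" and d: "d \<in> R"
    and w: "common_wall_in A B d c" and eq: "alcove_level A d = alcove_level B d"
  shows "A = B"
proof (rule alcove_eqI[OF A B])
  fix g assume g: "g \<in> R"
  show "alcove_level A g = alcove_level B g"
  proof (cases "\<exists>t. g = t *\<^sub>R d")
    case True
    then obtain t where t: "g = t *\<^sub>R d" by blast
    hence "t = 1 \<or> t = -1"
      using root_system_scaleR[OF R d] g by blast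
    thus ?thesis
      using t eq alcove_level_uminus[OF R A d] alcove_level_uminus[OF R B d] by auto
  next
    case False
    thus ?thesis using common_wall_level_eq[OF R A B g w] by blast
  qed
qed

lemma alcove_step_levels:
  assumes A: "A \<in> alcoves R" and B: "B \<in> alcoves R" and g: "g \<in> R"
    and w: "common_wall_in A B g k" and sa: "\<forall>\<mu>\<in>A. \<mu> \<bullet> coroot g < of_int k"
    and sb: "\<forall>\<mu>\<in>B. \<mu> \<bullet> coroot g > of_int k"
  shows "alcove_level A g = k - 1 \<and> alcove_level B g = k"
proof -
  obtain a b where a: "a \<in> A" and b: "b \<in> B"
    using alcove_nonempty[OF A] alcove_nonempty[OF B] by blast
  have "of_int (alcove_level A g) < a \<bullet> coroot g" "a \<bullet> coroot g < of_int k"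
    "of_int k < b \<bullet> coroot g" "b \<bullet> coroot g < of_int (alcove_level B g) + 1"
    using alcove_level_bounds[OF A g a] alcove_level_bounds[OF B g b] sa sb a b by auto
  hence "alcove_level A g < k" "k < alcove_level B g + 1"
    by linarith+
  moreover have "k - 1 \<le> alcove_level A g" "alcove_level B g \<le> k"
    using common_wall_level_bounds[OF A g w] common_wall_level_bounds[OF B g]
      common_wall_in_sym[OF w] by auto
  ultimately show ?thesis
    by linarith
qed

section \<open>Affine reflections\<close>

definition aff_refl :: "'a::euclidean_space \<Rightarrow> int \<Rightarrow> 'a \<Rightarrow> 'a" where
  "aff_refl r k \<mu> = \<mu> - (\<mu> \<bullet> coroot r - of_int k) *\<^sub>R r"

lemma inner_coroot_aff_refl_self:
  "r \<noteq> 0 \<Longrightarrow> aff_refl r k \<mu> \<bullet> coroot r = 2 * of_int k - \<mu> \<bullet> coroot r"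
  unfolding aff_refl_def using inner_coroot_self[of r] by (simp add: inner_diff_left algebra_simps)

lemma aff_refl_aff_refl [simp]: "r \<noteq> 0 \<Longrightarrow> aff_refl r k (aff_refl r k \<mu>) = \<mu>"
  unfolding aff_refl_def[of r k "aff_refl r k \<mu>"] inner_coroot_aff_refl_self
  by (simp add: aff_refl_def algebra_simps)

lemma image_aff_refl_aff_refl [simp]: "r \<noteq> 0 \<Longrightarrow> aff_refl r k ` aff_refl r k ` X = X"
  by (simp add: image_image)

lemma aff_refl_fixed: "\<mu> \<in> hyp r k \<Longrightarrow> aff_refl r k \<mu> = \<mu>"
  by (simp add: aff_refl_def hyp_def)

lemma inner_coroot_aff_refl:
  assumes "r \<noteq> 0" "g \<noteq> 0"
  shows "aff_refl r k \<mu> \<bullet> coroot g = \<mu> \<bullet> coroot (refl r g) + of_int k * (r \<bullet> coroot g)"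
  unfolding inner_coroot_refl[OF assms] aff_refl_def by (simp add: inner_diff_left algebra_simps)

lemma dist_aff_refl:
  assumes "r \<noteq> 0"
  shows "dist (aff_refl r k a) (aff_refl r k b) = dist a b"
proof -
  have "aff_refl r k a - aff_refl r k b = refl r (a - b)"
    unfolding aff_refl_def refl_def by (simp add: inner_diff_left algebra_simps)
  thus ?thesis
    using inner_refl_refl[OF assms, of "a - b"] by (simp add: dist_norm norm_eq_sqrt_inner)
qed

lemma continuous_on_aff_refl: "continuous_on X (aff_refl r k)"
  unfolding aff_refl_def by (intro continuous_intros)

lemma closure_aff_refl: "aff_refl r k ` closure A \<subseteq> closure (aff_refl r k ` A)"
  by (rule continuous_image_closure_subset[OF continuous_on_aff_refl[of UNIV]]) simp

lemma aff_refl_hyp: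
  assumes R: "root_system R" and r: "r \<in> R" and g: "g \<in> R"
  obtains n' where "\<And>\<mu>. aff_refl r k \<mu> \<in> hyp g n \<longleftrightarrow> \<mu> \<in> hyp (refl r g) n'"
proof -
  obtain c where "r \<bullet> coroot g = of_int c"
    using root_system_inner_coroot_Ints[OF R g r] by (auto elim: Ints_cases)
  thus thesis
    using that[of "n - k * c"]
    by (auto simp: hyp_def eq_diff_eq
        inner_coroot_aff_refl[OF root_system_nonzero[OF R r] root_system_nonzero[OF R g]])
qed

lemma aff_refl_complement_hyperplanes:
  assumes R: "root_system R" and r: "r \<in> R"
  shows "aff_refl r k ` (UNIV - (\<Union>\<alpha>\<in>R. \<Union>n. hyp \<alpha> n)) \<subseteq> UNIV - (\<Union>\<alpha>\<in>R. \<Union>n. hyp \<alpha> n)"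
proof (rule image_subsetI)
  fix \<nu> assume \<nu>: "\<nu> \<in> UNIV - (\<Union>\<alpha>\<in>R. \<Union>n. hyp \<alpha> n)"
  show "aff_refl r k \<nu> \<in> UNIV - (\<Union>\<alpha>\<in>R. \<Union>n. hyp \<alpha> n)"
  proof (intro DiffI UNIV_I notI)
    assume "aff_refl r k \<nu> \<in> (\<Union>\<alpha>\<in>R. \<Union>n. hyp \<alpha> n)"
    then obtain g n where g: "g \<in> R" "aff_refl r k \<nu> \<in> hyp g n"
      by blast
    obtain n' where "\<And>\<mu>. aff_refl r k \<mu> \<in> hyp g n \<longleftrightarrow> \<mu> \<in> hyp (refl r g) n'"
      using aff_refl_hyp[OF R r g(1)] by blast
    hence "\<nu> \<in> hyp (refl r g) n'"
      using g(2) by blast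
    thus False
      using \<nu> root_system_refl[OF R r g(1)] by blast
  qed
qed

lemma aff_refl_alcove:
  assumes R: "root_system R" and r: "r \<in> R" and A: "A \<in> alcoves R"
  shows "aff_refl r k ` A \<in> alcoves R"
proof -
  let ?S = "UNIV - (\<Union>\<alpha>\<in>R. \<Union>k. hyp \<alpha> k)" and ?s = "aff_refl r k"
  have into: "?s ` ?S \<subseteq> ?S"
    using aff_refl_complement_hyperplanes[OF R r] .
  hence hom: "homeomorphism ?S ?S ?s ?s"
    using root_system_nonzero[OF R r] by (intro homeomorphismI continuous_on_aff_refl) simp_all
  obtain x where x: "x \<in> ?S" "A = connected_component_set ?S x"
    using A unfolding alcoves_def components_iff by blast
  have "?s ` A = connected_component_set ?S (?s x)"
    using connected_component_set_homeomorphism[OF hom x(1)] x(2) by simp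
  moreover have "?s x \<in> ?S"
    using into x(1) by blast
  ultimately show ?thesis
    unfolding alcoves_def components_iff by blast
qed

lemma aff_refl_common_wall:
  assumes R: "root_system R" and r: "r \<in> R" and g: "g \<in> R" and w: "common_wall_in A B g n"
  obtains n' where "common_wall_in (aff_refl r k ` A) (aff_refl r k ` B) (refl r g) n'"
proof -
  let ?s = "aff_refl r k"
  have rnz: "r \<noteq> 0"
    using root_system_nonzero[OF R r] .
  obtain n' where n': "\<And>\<mu>. ?s \<mu> \<in> hyp g n \<longleftrightarrow> \<mu> \<in> hyp (refl r g) n'"
    using aff_refl_hyp[OF R r g] by blast
  obtain p \<epsilon> where p: "p \<in> hyp g n" and \<epsilon>: "\<epsilon> > 0"
    and sub: "hyp g n \<inter> ball p \<epsilon> \<subseteq> closure A \<inter> closure B"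
    using w unfolding common_wall_in_def by blast
  have "?s p \<in> hyp (refl r g) n'"
    using p n'[of "?s p"] rnz by simp
  moreover have "hyp (refl r g) n' \<inter> ball (?s p) \<epsilon> \<subseteq> closure (?s ` A) \<inter> closure (?s ` B)"
  proof
    fix z assume z: "z \<in> hyp (refl r g) n' \<inter> ball (?s p) \<epsilon>"
    have "dist p (?s z) < \<epsilon>"
      using z dist_aff_refl[OF rnz, of k "?s p" z] rnz by simp
    hence "?s z \<in> closure A \<inter> closure B"
      using z n' sub by auto
    hence "?s (?s z) \<in> ?s ` closure A \<inter> ?s ` closure B"
      by blast
    hence "z \<in> ?s ` closure A \<inter> ?s ` closure B"
      using rnz by simp
    thus "z \<in> closure (?s ` A) \<inter> closure (?s ` B)"
      using closure_aff_refl by blast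
  qed
  ultimately show thesis
    using that \<epsilon> unfolding common_wall_in_def by blast
qed

lemma aff_refl_adjacent:
  assumes R: "root_system R" and r: "r \<in> R" and adj: "adjacent R A B"
  shows "adjacent R (aff_refl r k ` A) (aff_refl r k ` B)"
proof -
  obtain g n where g: "g \<in> R" "common_wall_in A B g n"
    using adj unfolding adjacent_def by blast
  obtain n' where "common_wall_in (aff_refl r k ` A) (aff_refl r k ` B) (refl r g) n'"
    using aff_refl_common_wall[OF R r g] by blast
  moreover have "aff_refl r k ` A \<noteq> aff_refl r k ` B"
    using adj root_system_nonzero[OF R r] unfolding adjacent_def by (metis image_aff_refl_aff_refl)
  ultimately show ?thesis
    using adj aff_refl_alcove[OF R r] root_system_refl[OF R r g(1)] unfolding adjacent_def by blast
qed

text \<open>An alcove touching the wall \<open>H\<^bsub>r,k\<^esub>\<close> has level \<open>k - 1\<close> or \<open>k\<close> at \<open>r\<close>; the reflection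
  fixes the wall and exchanges these two levels.\<close>
lemma aff_refl_swap:
  assumes R: "root_system R" and r: "r \<in> R" and A: "A \<in> alcoves R" and B: "B \<in> alcoves R"
    and w: "common_wall_in A B r k" and ne: "A \<noteq> B"
  shows "aff_refl r k ` B = A"
proof -
  let ?s = "aff_refl r k"
  have rnz: "r \<noteq> 0"
    using root_system_nonzero[OF R r] .
  have sB: "?s ` B \<in> alcoves R"
    using aff_refl_alcove[OF R r B] .
  have w': "common_wall_in A (?s ` B) r k"
  proof -
    obtain p \<epsilon> where "p \<in> hyp r k" "\<epsilon> > 0" and sub: "hyp r k \<inter> ball p \<epsilon> \<subseteq> closure A \<inter> closure B"
      using w unfolding common_wall_in_def by blast
    moreover have "z \<in> closure (?s ` B)" if "z \<in> hyp r k" "z \<in> closure B" for z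
      using that aff_refl_fixed[of z r k] closure_aff_refl[of r k B] by (metis image_eqI subsetD)
    ultimately show ?thesis
      unfolding common_wall_in_def by blast
  qed
  obtain b where b: "b \<in> B"
    using alcove_nonempty[OF B] by blast
  have "alcove_level (?s ` B) r = 2 * k - alcove_level B r - 1"
    using alcove_level_bounds[OF B r b] inner_coroot_aff_refl_self[OF rnz, of k b]
    by (intro alcove_level_eqI[OF sB r, of "?s b"]) (use b in auto)
  moreover have "alcove_level A r \<noteq> alcove_level B r"
    using common_wall_alcove_eqI[OF R A B r w] ne by blast
  moreover have "k - 1 \<le> alcove_level A r \<and> alcove_level A r \<le> k"
    "k - 1 \<le> alcove_level B r \<and> alcove_level B r \<le> k"
    using common_wall_level_bounds[OF A r w] common_wall_level_bounds[OF B r]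
      common_wall_in_sym[OF w] by auto
  ultimately have "alcove_level A r = alcove_level (?s ` B) r"
    by linarith
  thus ?thesis
    using common_wall_alcove_eqI[OF R A sB r w'] by simp
qed

section \<open>Shortening alcove paths\<close>

text \<open>A path that visits \<open>s\<close>-images of its own alcoves can be shortcut: between the steps
  \<open>a\<close> and \<open>b\<close> it is replaced by the image of the stretch it skips, dropping two steps.\<close>
lemma path_shortcut:
  assumes step: "\<And>i. i < m \<Longrightarrow> P (X i) (X (Suc i))"
    and s_step: "\<And>i. i < m \<Longrightarrow> P (s (X i)) (s (X (Suc i)))"
    and a: "s (X (Suc a)) = X a" and b: "s (X b) = X (Suc b)" and ab: "a < b" "b < m"
  obtains Y where "Y 0 = X 0" "Y (m - 2) = X m" "\<And>i. i < m - 2 \<Longrightarrow> P (Y i) (Y (Suc i))"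
proof
  define Y where "Y j = (if j < a then X j else if j < b then s (X (Suc j)) else X (Suc (Suc j)))" for j
  show "Y 0 = X 0"
    using a ab by (cases a) (simp_all add: Y_def)
  have m: "Suc (Suc (m - 2)) = m" "Suc (m - 2) = m - 1" "Suc (m - 1) = m"
    using ab by auto
  show "Y (m - 2) = X m"
  proof (cases "b = m - 1")
    case True
    thus ?thesis using b ab m by (simp add: Y_def)
  next
    case False
    hence "\<not> m - 2 < a" "\<not> m - 2 < b"
      using ab by auto
    thus ?thesis using m(1) by (simp add: Y_def)
  qed
  fix i assume i: "i < m - 2"
  consider "Suc i < a" | "Suc i = a" | "a \<le> i" "Suc i < b" | "a \<le> i" "Suc i = b" | "b \<le> i"
    using ab by linarith
  thus "P (Y i) (Y (Suc i))"
  proof cases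
    case 2
    thus ?thesis using step[of i] a ab i by (simp add: Y_def)
  next
    case 4
    thus ?thesis using step[of "Suc b"] b i by (simp add: Y_def)
  qed (use step s_step ab i in \<open>auto simp: Y_def\<close>)
qed

lemma alcove_path_double_crossing:
  assumes R: "root_system R" and r: "r \<in> R"
    and adj: "\<And>i. i < m \<Longrightarrow> adjacent R (As i) (As (Suc i))"
    and ab: "a < b" "b < m"
    and wa: "common_wall_in (As a) (As (Suc a)) r k"
    and wb: "common_wall_in (As b) (As (Suc b)) r k"
  obtains Bs where "Bs 0 = As 0" "Bs (m - 2) = As m" "\<And>i. i < m - 2 \<Longrightarrow> adjacent R (Bs i) (Bs (Suc i))"
proof (rule path_shortcut[where P = "adjacent R" and X = As and s = "(`) (aff_refl r k)" and a = a and b = b])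
  have alc: "As i \<in> alcoves R" "As (Suc i) \<in> alcoves R" "As i \<noteq> As (Suc i)" if "i < m" for i
    using adj[OF that] unfolding adjacent_def by auto
  show "aff_refl r k ` As (Suc a) = As a"
    using aff_refl_swap[OF R r alc(1,2) wa alc(3)] ab by simp
  have "aff_refl r k ` As (Suc b) = As b"
    using aff_refl_swap[OF R r alc(1,2) wb alc(3)] ab by simp
  thus "aff_refl r k ` As b = As (Suc b)"
    using root_system_nonzero[OF R r] by (metis image_aff_refl_aff_refl)
qed (use assms aff_refl_adjacent[OF R r] in auto)

lemma int_seq_down_crossing:
  fixes w :: "nat \<Rightarrow> int"
  assumes step: "\<And>i. x \<le> i \<Longrightarrow> i < y \<Longrightarrow> \<bar>w (Suc i) - w i\<bar> \<le> 1"
    and xy: "x \<le> y" and wx: "K \<le> w x" and wy: "w y < K"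
  shows "\<exists>b. x \<le> b \<and> b < y \<and> w b = K \<and> w (Suc b) = K - 1"
  using step xy wy
proof (induction y)
  case 0
  thus ?case using wx by simp
next
  case (Suc y)
  show ?case
  proof (cases "x \<le> y \<and> w y < K")
    case True
    thus ?thesis using Suc by (metis less_SucI)
  next
    case False
    show ?thesis
    proof (cases "x \<le> y")
      case True
      hence "K \<le> w y" "\<bar>w (Suc y) - w y\<bar> \<le> 1"
        using False Suc.prems(1)[of y] by auto
      thus ?thesis using True Suc.prems by (intro exI[of _ y]) auto
    next
      case False
      thus ?thesis using wx Suc.prems by (simp add: le_Suc_eq)
    qed
  qed
qed

section \<open>Levels along a \<open>\<lambda>\<close>-chain\<close>

locale alcove_chain =
  fixes R D :: "'a::euclidean_space set" and lam :: 'a and \<beta> :: "nat \<Rightarrow> 'a"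
    and m :: nat and As :: "nat \<Rightarrow> 'a set"
  assumes root_system: "root_system R" and dominant: "dominant R D lam"
    and start: "As 0 = fund_alcove R D"
    and stop: "As m = (\<lambda>\<mu>. \<mu> - lam) ` fund_alcove R D"
    and step: "\<And>i. i < m \<Longrightarrow> alcove_step R (As i) (- \<beta> i) (As (Suc i))"
    and minimal: "\<And>Bs m'. alcove_path R Bs m' (fund_alcove R D) ((\<lambda>\<mu>. \<mu> - lam) ` fund_alcove R D) \<Longrightarrow> m \<le> m'"
    and nonempty: "0 < m"
begin

lemma adjacent_step: "i < m \<Longrightarrow> adjacent R (As i) (As (Suc i))"
  using step unfolding alcove_step_def by blast

lemma alcove: "i \<le> m \<Longrightarrow> As i \<in> alcoves R"
  using adjacent_step[of i] adjacent_step[of "m - 1"] nonempty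
  unfolding adjacent_def by (cases "i < m") (auto simp: le_less)

lemma root: "i < m \<Longrightarrow> \<beta> i \<in> R"
  using step root_system_uminus[OF root_system, of "- \<beta> i"] unfolding alcove_step_def by force

lemma level_start:
  assumes g: "g \<in> pos_roots R D"
  shows "alcove_level (As 0) g = 0"
proof -
  obtain x where x: "x \<in> As 0"
    using alcove_nonempty[OF alcove[of 0]] by auto
  hence "0 < x \<bullet> coroot g \<and> x \<bullet> coroot g < 1"
    using g unfolding start fund_alcove_def by blast
  thus ?thesis
    using alcove_level_eqI[OF alcove[of 0] _ x, of g 0] g unfolding pos_roots_def by simp
qed

lemma level_stop_nonpos:
  assumes g: "g \<in> pos_roots R D"
  shows "alcove_level (As m) g \<le> 0"
proof -
  obtain x where x: "x \<in> As m"
    using alcove_nonempty[OF alcove[of m]] by auto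
  then obtain \<mu> where \<mu>: "\<mu> \<in> fund_alcove R D" "x = \<mu> - lam"
    unfolding stop by blast
  obtain N where N: "lam \<bullet> coroot g = of_int N" "N \<ge> 0"
    using dominant g unfolding dominant_def by (auto elim!: Ints_cases)
  have "0 < \<mu> \<bullet> coroot g" "\<mu> \<bullet> coroot g < 1"
    using \<mu>(1) g unfolding fund_alcove_def by blast+
  hence "alcove_level (As m) g = - N"
    using \<mu>(2) N g alcove_level_eqI[OF alcove[of m] _ x, of g "- N"]
    unfolding pos_roots_def by (simp add: inner_diff_left)
  thus ?thesis using N by simp
qed

lemma step_crossing:
  assumes i: "i < m"
  shows "alcove_level (As (Suc i)) (\<beta> i) = alcove_level (As i) (\<beta> i) - 1
    \<and> common_wall_in (As i) (As (Suc i)) (\<beta> i) (alcove_level (As i) (\<beta> i))"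
proof -
  have A: "As i \<in> alcoves R" and B: "As (Suc i) \<in> alcoves R"
    using alcove i by auto
  obtain k where w: "common_wall_in (As i) (As (Suc i)) (- \<beta> i) k"
    and "\<forall>\<mu>\<in>As i. \<mu> \<bullet> coroot (- \<beta> i) < of_int k"
    and "\<forall>\<mu>\<in>As (Suc i). \<mu> \<bullet> coroot (- \<beta> i) > of_int k"
    using step[OF i] unfolding alcove_step_def by blast
  hence "alcove_level (As i) (- \<beta> i) = k - 1" "alcove_level (As (Suc i)) (- \<beta> i) = k"
    using alcove_step_levels[OF A B root_system_uminus[OF root_system root[OF i]]] by auto
  moreover have "common_wall_in (As i) (As (Suc i)) (\<beta> i) (- k)"
    using w common_wall_in_uminus[of "As i" "As (Suc i)" "\<beta> i" "- k"] by simp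
  ultimately show ?thesis
    using alcove_level_uminus[OF root_system A root[OF i]]
      alcove_level_uminus[OF root_system B root[OF i]] by auto
qed

lemma step_level_other:
  assumes i: "i < m" and g: "g \<in> R" and ne: "\<beta> i \<noteq> g" "\<beta> i \<noteq> - g"
  shows "alcove_level (As (Suc i)) g = alcove_level (As i) g"
proof -
  have "g \<noteq> \<beta> i" "g \<noteq> - \<beta> i"
    using ne by auto
  hence "\<forall>t. g \<noteq> t *\<^sub>R \<beta> i"
    using root_system_parallel[OF root_system root[OF i] g] by blast
  moreover have "As i \<in> alcoves R" "As (Suc i) \<in> alcoves R"
    using alcove i by auto
  ultimately show ?thesis
    using common_wall_level_eq[OF root_system _ _ g conjunct2[OF step_crossing[OF i]]] by metis
qed

lemma step_level_cases:
  assumes i: "i < m" and g: "g \<in> R"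
  obtains "\<beta> i = g" "alcove_level (As (Suc i)) g = alcove_level (As i) g - 1"
      "common_wall_in (As i) (As (Suc i)) g (alcove_level (As i) g)"
    | "\<beta> i = - g" "alcove_level (As (Suc i)) g = alcove_level (As i) g + 1"
      "common_wall_in (As i) (As (Suc i)) g (alcove_level (As (Suc i)) g)"
    | "\<beta> i \<noteq> g" "\<beta> i \<noteq> - g" "alcove_level (As (Suc i)) g = alcove_level (As i) g"
proof -
  have A: "As i \<in> alcoves R" and B: "As (Suc i) \<in> alcoves R"
    using alcove i by auto
  consider "\<beta> i = g" | "\<beta> i = - g" | "\<beta> i \<noteq> g" "\<beta> i \<noteq> - g"
    by blast
  thus thesis
  proof cases
    case 1
    thus thesis using that(1) step_crossing[OF i] by simp
  next
    case 2
    hence "alcove_level (As (Suc i)) g = alcove_level (As i) g + 1"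
      "common_wall_in (As i) (As (Suc i)) g (alcove_level (As i) g + 1)"
      using step_crossing[OF i] alcove_level_uminus[OF root_system A g]
        alcove_level_uminus[OF root_system B g]
        common_wall_in_uminus[of "As i" "As (Suc i)" g "alcove_level (As i) g + 1"] by simp_all
    thus thesis
      using that(2) 2 by simp
  next
    case 3
    thus thesis using that(3) step_level_other[OF i g] by blast
  qed
qed

lemma no_double_crossing:
  assumes r: "r \<in> R" and ab: "a < b" "b < m"
    and "common_wall_in (As a) (As (Suc a)) r k" "common_wall_in (As b) (As (Suc b)) r k"
  shows False
proof -
  obtain Bs where "Bs 0 = As 0" "Bs (m - 2) = As m"
    "\<And>i. i < m - 2 \<Longrightarrow> adjacent R (Bs i) (Bs (Suc i))"
    using alcove_path_double_crossing[OF root_system r adjacent_step ab assms(4,5)] by blast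
  hence "m \<le> m - 2"
    using minimal[of Bs "m - 2"] start stop unfolding alcove_path_def by auto
  thus False using ab by simp
qed

lemma not_uminus_pos_root:
  assumes g: "g \<in> pos_roots R D" and j: "j < m"
  shows "\<beta> j \<noteq> - g"
proof
  assume neg: "\<beta> j = - g"
  have gR: "g \<in> R"
    using g unfolding pos_roots_def by blast
  define w where "w i = alcove_level (As i) g" for i
  have w_step: "\<bar>w (Suc i) - w i\<bar> \<le> 1" if "i < m" for i
    unfolding w_def by (rule step_level_cases[OF that gR]) auto
  have down: "common_wall_in (As b) (As (Suc b)) g (w b)" if "b < m" "w (Suc b) = w b - 1" for b
    by (rule step_level_cases[OF that(1) gR]) (use that in \<open>auto simp: w_def\<close>)
  define K where "K = w (Suc j)"
  have "g \<noteq> - g"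
    using root_system_nonzero[OF root_system gR] by (simp add: eq_neg_iff_add_eq_0 flip: scaleR_2)
  have "w (Suc j) = w j + 1 \<and> common_wall_in (As j) (As (Suc j)) g (w (Suc j))"
    by (rule step_level_cases[OF j gR]) (use neg \<open>g \<noteq> - g\<close> in \<open>auto simp: w_def\<close>)
  hence up: "w j = K - 1" and wall: "common_wall_in (As j) (As (Suc j)) g K"
    unfolding K_def by auto
  show False
  proof (cases "1 \<le> K")
    case True
    have "w m < K"
      using level_stop_nonpos[OF g] True unfolding w_def by simp
    then obtain b where b: "Suc j \<le> b" "b < m" "w b = K" "w (Suc b) = K - 1"
      using int_seq_down_crossing[of "Suc j" m w K] w_step j unfolding K_def by auto
    hence "common_wall_in (As b) (As (Suc b)) g K"
      using down[of b] by simp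
    thus False
      using no_double_crossing[OF gR _ b(2) wall] b(1) by simp
  next
    case False
    have "K \<le> w 0"
      using level_start[OF g] False unfolding w_def by simp
    then obtain b where b: "b < j" "w b = K" "w (Suc b) = K - 1"
      using int_seq_down_crossing[of 0 j w K] w_step j up by auto
    hence "common_wall_in (As b) (As (Suc b)) g K"
      using down[of b] j by simp
    thus False
      using no_double_crossing[OF gR b(1) j _ wall] by simp
  qed
qed

lemma level_count:
  assumes g: "g \<in> pos_roots R D" and j: "j \<le> m"
  shows "alcove_level (As j) g = - int (card {i. i < j \<and> \<beta> i = g})"
  using j
proof (induction j)
  case 0
  thus ?case using level_start[OF g] by simp
next
  case (Suc j)
  have j: "j < m" and gR: "g \<in> R"
    using Suc.prems g unfolding pos_roots_def by auto
  show ?case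
  proof (rule step_level_cases[OF j gR])
    assume "\<beta> j = g" "alcove_level (As (Suc j)) g = alcove_level (As j) g - 1"
    moreover have "{i. i < Suc j \<and> \<beta> i = g} = insert j {i. i < j \<and> \<beta> i = g}"
      using \<open>\<beta> j = g\<close> by auto
    ultimately show ?case using Suc j by simp
  next
    assume "\<beta> j = - g"
    thus ?case using not_uminus_pos_root[OF g j] by simp
  next
    assume "\<beta> j \<noteq> g" "alcove_level (As (Suc j)) g = alcove_level (As j) g"
    moreover have "{i. i < Suc j \<and> \<beta> i = g} = {i. i < j \<and> \<beta> i = g}"
      using calculation(1) less_Suc_eq by auto
    ultimately show ?case using Suc j by simp
  qed
qed

end

lemma card_earlier_window:
  assumes inj: "inj_on \<beta> {t..<t+q}" and i: "i \<in> {t..<t+q}"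
  shows "card {j. j < t \<and> \<beta> j = \<beta> i} = lcount \<beta> i"
    and "card {j. j < t + q \<and> \<beta> j = \<beta> i} = Suc (lcount \<beta> i)"
proof -
  have same: "j = i" if "j \<in> {t..<t+q}" "\<beta> j = \<beta> i" for j
    using inj i that unfolding inj_on_def by blast
  have "j < t \<longleftrightarrow> j < i" "j < t + q \<longleftrightarrow> j < i \<or> j = i" if "\<beta> j = \<beta> i" for j
    using i same[of j] that by (cases "j < t"; auto)+
  hence eqs: "{j. j < t \<and> \<beta> j = \<beta> i} = {j. j < i \<and> \<beta> j = \<beta> i}"
    "{j. j < t + q \<and> \<beta> j = \<beta> i} = insert i {j. j < i \<and> \<beta> j = \<beta> i}"
    by auto
  from eqs(1) show "card {j. j < t \<and> \<beta> j = \<beta> i} = lcount \<beta> i"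
    unfolding lcount_def by simp
  from eqs(2) show "card {j. j < t + q \<and> \<beta> j = \<beta> i} = Suc (lcount \<beta> i)"
    unfolding lcount_def by simp
qed

context alcove_chain
begin

lemma level_window:
  assumes "t + q \<le> m" "inj_on \<beta> {t..<t+q}" "i \<in> {t..<t+q}" "\<beta> i \<in> pos_roots R D"
  shows "alcove_level (As t) (\<beta> i) = - int (lcount \<beta> i)"
    and "alcove_level (As (t + q)) (\<beta> i) = - int (lcount \<beta> i) - 1"
  using level_count[OF assms(4), of t] level_count[OF assms(4), of "t + q"]
    card_earlier_window[OF assms(2,3)] assms(1) by simp_all

end

lemma lambda_chain_alcove_chain:
  assumes "lambda_chain R D lam \<beta> m" "root_system R" "dominant R D lam" "0 < m"
  obtains As where "alcove_chain R D lam \<beta> m As"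
proof -
  obtain As where "As 0 = fund_alcove R D" "As m = (\<lambda>\<mu>. \<mu> - lam) ` fund_alcove R D"
    "\<forall>i<m. alcove_step R (As i) (- \<beta> i) (As (Suc i))"
    "\<forall>Bs m'. alcove_path R Bs m' (fund_alcove R D) ((\<lambda>\<mu>. \<mu> - lam) ` fund_alcove R D) \<longrightarrow> m \<le> m'"
    using assms(1) unfolding lambda_chain_def Let_def by blast
  hence "alcove_chain R D lam \<beta> m As"
    using assms(2-4) by (intro alcove_chain.intro) auto
  thus thesis
    by (rule that)
qed

lemma exists_inner_eq_pair:
  fixes a b :: "'a::euclidean_space"
  assumes np: "\<forall>c. b \<noteq> c *\<^sub>R a" and a: "a \<noteq> 0"
  obtains v where "v \<bullet> a = s" "v \<bullet> b = t"
proof -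
  have "\<forall>c. a \<noteq> c *\<^sub>R b"
  proof (intro allI notI)
    fix c assume "a = c *\<^sub>R b"
    hence "b = (1 / c) *\<^sub>R a"
      using a by auto
    thus False
      using np by blast
  qed
  define oa ob where "oa = orth_comp b a" and "ob = orth_comp a b"
  have "oa \<bullet> a > 0" "ob \<bullet> b > 0"
    using orth_comp_inner_pos np \<open>\<forall>c. a \<noteq> c *\<^sub>R b\<close> unfolding oa_def ob_def by blast+
  moreover have "oa \<bullet> b = 0" "ob \<bullet> a = 0"
    using inner_orth_comp[of b a] inner_orth_comp[of a b] unfolding oa_def ob_def
    by (simp_all add: inner_commute)
  ultimately have "v \<bullet> a = s" "v \<bullet> b = t"
    if "v = (s / (oa \<bullet> a)) *\<^sub>R oa + (t / (ob \<bullet> b)) *\<^sub>R ob" for v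
    using that by (simp_all add: inner_add_left)
  thus thesis
    using that by blast
qed

lemma dim2_subset_span_pair:
  fixes a b :: "'a::euclidean_space"
  assumes dim: "dim Q = 2" and ab: "a \<in> Q" "b \<in> Q" and np: "\<forall>c. b \<noteq> c *\<^sub>R a" and a: "a \<noteq> 0"
  shows "Q \<subseteq> span {a, b}"
proof -
  have "b \<notin> span {a}"
    using np unfolding span_singleton by auto
  moreover have "a \<noteq> b"
    using np[rule_format, of 1] by auto
  ultimately have "independent {a, b}"
    using a by (subst insert_commute) (simp add: independent_insert)
  moreover have "dim Q \<le> card {a, b}"
    using dim \<open>a \<noteq> b\<close> by simp
  ultimately show ?thesis
    using card_ge_dim_independent[of "{a, b}" Q] ab by blast
qed

lemma span_pair_obtain:
  assumes "\<rho> \<in> span {a, b}"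
  obtains c d where "\<rho> = c *\<^sub>R a + d *\<^sub>R b"
proof -
  obtain c where "\<rho> - c *\<^sub>R a \<in> span {b}"
    using assms unfolding span_insert by blast
  then obtain d where "\<rho> - c *\<^sub>R a = d *\<^sub>R b"
    unfolding span_singleton by blast
  thus thesis
    using that[of c d] by (simp add: algebra_simps)
qed

lemma Inter_hyp_eq_pair:
  fixes a b v :: "'a::euclidean_space"
  assumes a: "a \<in> P" and b: "b \<in> P" and span: "P \<subseteq> span {a, b}"
    and v: "\<And>e. e \<in> P \<Longrightarrow> v \<bullet> coroot e = of_int (n e)"
  shows "(\<Inter>e\<in>P. hyp e (n e)) = hyp a (n a) \<inter> hyp b (n b)"
proof (intro equalityI subsetI)
  fix \<mu> assume \<mu>: "\<mu> \<in> hyp a (n a) \<inter> hyp b (n b)"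
  have "(\<mu> - v) \<bullet> coroot a = 0" "(\<mu> - v) \<bullet> coroot b = 0"
    using \<mu> v[OF a] v[OF b] by (simp_all add: hyp_def inner_diff_left)
  hence "orthogonal (\<mu> - v) a" "orthogonal (\<mu> - v) b"
    unfolding orthogonal_def inner_coroot_eq_0_iff .
  hence "orthogonal (\<mu> - v) e" if "e \<in> P" for e
    using orthogonal_to_span[of e "{a, b}" "\<mu> - v"] span that by blast
  hence "(\<mu> - v) \<bullet> coroot e = 0" if "e \<in> P" for e
    using that unfolding orthogonal_def inner_coroot_eq_0_iff by blast
  hence "\<mu> \<in> hyp e (n e)" if "e \<in> P" for e
    using v[OF that] that by (simp add: hyp_def inner_diff_left)
  thus "\<mu> \<in> (\<Inter>e\<in>P. hyp e (n e))"
    by blast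
qed (use a b in blast)

lemma aff_dim_hyp_Int_hyp:
  fixes a b v :: "'a::euclidean_space"
  assumes np: "\<forall>c. b \<noteq> c *\<^sub>R a" and a: "a \<noteq> 0" and v: "v \<in> hyp a ka \<inter> hyp b kb"
  shows "aff_dim (hyp a ka \<inter> hyp b kb) = int DIM('a) - 2"
proof -
  have hyp_eq: "hyp g k = {\<mu>. coroot g \<bullet> \<mu> = of_int k}" for g k
    by (auto simp: hyp_def inner_commute)
  have ca: "coroot a \<noteq> 0"
    using a by (simp add: coroot_def)
  have "\<not> UNIV \<subseteq> hyp a ka"
  proof
    assume "UNIV \<subseteq> hyp a ka"
    hence "v + coroot a \<in> hyp a ka" by blast
    thus False using v ca by (simp add: hyp_def inner_add_left)
  qed
  hence "aff_dim (hyp a ka) = int DIM('a) - 1"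
    using aff_dim_affine_Int_hyperplane[OF affine_UNIV, of "coroot a" "of_int ka"] v
    by (auto simp: hyp_eq aff_dim_UNIV)
  moreover have "\<not> hyp a ka \<subseteq> hyp b kb"
  proof
    assume sub: "hyp a ka \<subseteq> hyp b kb"
    define u where "u = orth_comp a b"
    have "u \<bullet> coroot a = 0" "u \<bullet> b > 0"
      using orth_comp_inner_pos[OF np] inner_orth_comp[of a b] inner_coroot_eq_0_iff[of u a]
      unfolding u_def by (simp_all add: inner_commute)
    hence "v + u \<in> hyp a ka"
      using v by (simp add: hyp_def inner_add_left)
    hence "v + u \<in> hyp b kb"
      using sub by blast
    hence "u \<bullet> coroot b = 0"
      using v by (simp add: hyp_def inner_add_left)
    thus False
      using \<open>u \<bullet> b > 0\<close> by (metis inner_coroot_eq_0_iff less_irrefl)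
  qed
  moreover have "affine (hyp a ka)"
    unfolding hyp_eq by (rule affine_hyperplane)
  moreover have "hyp a ka \<inter> hyp b kb \<noteq> {}"
    using v by blast
  ultimately show ?thesis
    using aff_dim_affine_Int_hyperplane[of "hyp a ka" "coroot b" "of_int kb"]
    by (simp add: hyp_eq[of b])
qed

section \<open>Concurrency in rank two\<close>

lemma nonneg_weights:
  fixes F1 F2 ra rb r :: real
  assumes "F1 + F2 > 0" "F1 * (r - ra) = F2 * (rb - r)" "ra \<le> r" "r \<le> rb" "ra < rb"
  shows "F1 \<ge> 0 \<and> F2 \<ge> 0"
proof (rule ccontr)
  assume "\<not> ?thesis"
  hence "F1 < 0 \<and> F2 > 0 \<or> F2 < 0 \<and> F1 > 0"
    using assms(1) by linarith
  thus False
  proof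
    assume F: "F1 < 0 \<and> F2 > 0"
    hence "F1 * (r - ra) \<le> 0" "F2 * (rb - r) \<ge> 0"
      using assms(3,4) by (simp_all add: mult_nonpos_nonneg)
    hence "r = ra" "rb = r"
      using assms(2) F by auto
    thus False using assms(5) by simp
  next
    assume F: "F2 < 0 \<and> F1 > 0"
    hence "F1 * (r - ra) \<ge> 0" "F2 * (rb - r) \<le> 0"
      using assms(3,4) by (simp_all add: mult_nonpos_nonneg)
    hence "r = ra" "rb = r"
      using assms(2) F by auto
    thus False using assms(5) by simp
  qed
qed

text \<open>\<open>x\<close> lies just above and \<open>y\<close> just below each hyperplane \<open>H\<^bsub>e,n e\<^esub>\<close>, \<open>e \<in> P\<close>;
  in the application they are points of the alcoves before and after the window of the chain.\<close>
locale rank2_strips =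
  fixes Q P :: "'a::euclidean_space set" and n :: "'a \<Rightarrow> int" and x y :: 'a
  assumes root_system: "root_system Q" and dim: "dim Q = 2" and P_subset: "P \<subseteq> Q"
    and P_or_uminus: "\<And>\<rho>. \<rho> \<in> Q \<Longrightarrow> \<rho> \<in> P \<or> - \<rho> \<in> P"
    and above: "\<And>e. e \<in> P \<Longrightarrow> of_int (n e) < x \<bullet> coroot e \<and> x \<bullet> coroot e < of_int (n e) + 1"
    and below: "\<And>e. e \<in> P \<Longrightarrow> of_int (n e) - 1 < y \<bullet> coroot e \<and> y \<bullet> coroot e < of_int (n e)"
begin

definition height :: "'a \<Rightarrow> real" where
  "height \<rho> = \<rho> \<bullet> (x - y)"

lemma nonzero: "e \<in> P \<Longrightarrow> e \<noteq> 0"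
  using root_system_nonzero[OF root_system] P_subset by blast

lemma finite_P: "finite P"
  using root_system P_subset unfolding root_system_def by (metis finite_subset)

lemma height_pos:
  assumes e: "e \<in> P"
  shows "height e > 0"
proof -
  have "(x - y) \<bullet> coroot e > 0"
    using above[OF e] below[OF e] by (simp add: inner_diff_left)
  thus ?thesis
    using nonzero[OF e] unfolding height_def coroot_def
    by (simp add: inner_commute zero_less_divide_iff) (smt (verit) inner_ge_zero)
qed

lemma uminus_notin_P: "e \<in> P \<Longrightarrow> - e \<notin> P"
  using height_pos[of e] height_pos[of "- e"] unfolding height_def by auto

lemma nonparallel:
  assumes a: "a \<in> P" and b: "b \<in> P" and ne: "a \<noteq> b"
  shows "\<forall>c. b \<noteq> c *\<^sub>R a"
proof (intro allI notI)
  fix c assume c: "b = c *\<^sub>R a"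
  hence "c = 1 \<or> c = -1"
    using root_system_scaleR[OF root_system, of a c] a b P_subset by auto
  thus False
    using c ne b uminus_notin_P[OF a] by auto
qed

lemma two_le_card_P: "2 \<le> card P"
proof (rule ccontr)
  assume "\<not> 2 \<le> card P"
  hence "card P \<le> Suc 0"
    by simp
  then obtain a where a: "P \<subseteq> {a}"
    using finite_P card_le_Suc0_iff_eq by (cases "P = {}") blast+
  have "Q \<subseteq> span {a}"
  proof
    fix \<rho> assume "\<rho> \<in> Q"
    hence "\<rho> = a \<or> \<rho> = - a"
      using P_or_uminus a by force
    thus "\<rho> \<in> span {a}"
      by (auto intro: span_base span_neg)
  qed
  hence "dim Q \<le> card {a}"
    by (rule dim_le_card) simp
  thus False
    using dim by simp
qed

end

context rank2_strips
begin

lemma cone_between: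
  assumes al: "al \<in> P" and be: "be \<in> P" and ne: "al \<noteq> be" and \<rho>: "\<rho> \<in> P"
    and lo: "(al \<bullet> z) / height al \<le> (\<rho> \<bullet> z) / height \<rho>"
    and hi: "(\<rho> \<bullet> z) / height \<rho> \<le> (be \<bullet> z) / height be"
    and lt: "(al \<bullet> z) / height al < (be \<bullet> z) / height be"
  shows "\<exists>a b. 0 \<le> a \<and> 0 \<le> b \<and> \<rho> = a *\<^sub>R al + b *\<^sub>R be"
proof -
  have "P \<subseteq> span {al, be}"
    using dim2_subset_span_pair[OF dim _ _ nonparallel[OF al be ne] nonzero[OF al]] al be P_subset by blast
  then obtain a b where ab: "\<rho> = a *\<^sub>R al + b *\<^sub>R be"
    using \<rho> span_pair_obtain by blast
  define r where "r \<nu> = (\<nu> \<bullet> z) / height \<nu>" for \<nu>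
  have r: "\<nu> \<bullet> z = r \<nu> * height \<nu>" if "\<nu> \<in> P" for \<nu>
    using height_pos[OF that] unfolding r_def by simp
  define F1 F2 where "F1 = a * height al" and "F2 = b * height be"
  have sum: "height \<rho> = F1 + F2"
    unfolding F1_def F2_def ab height_def by (simp add: inner_add_left)
  have "\<rho> \<bullet> z = a * (al \<bullet> z) + b * (be \<bullet> z)"
    unfolding ab by (simp add: inner_add_left)
  hence "r \<rho> * (F1 + F2) = r al * F1 + r be * F2"
    unfolding r[OF \<rho>] r[OF al] r[OF be] sum F1_def F2_def by (simp add: algebra_simps)
  hence "F1 * (r \<rho> - r al) = F2 * (r be - r \<rho>)"
    by (simp add: algebra_simps)
  hence "0 \<le> F1 \<and> 0 \<le> F2"
    using nonneg_weights[of F1 F2] sum height_pos[OF \<rho>] lo hi lt unfolding r_def by simp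
  hence "0 \<le> a" "0 \<le> b"
    using height_pos[OF al] height_pos[OF be] unfolding F1_def F2_def by (simp_all add: zero_le_mult_iff)
  thus ?thesis
    using ab by blast
qed

text \<open>\<open>P\<close> lies in the cone spanned by two of its elements: those minimising and maximising
  the slope \<open>\<rho> \<bullet> z / height \<rho>\<close> with respect to a vector \<open>z\<close> orthogonal to some \<open>a\<^sub>0 \<in> P\<close>.\<close>
lemma cone_generators:
  obtains al be where "al \<in> P" "be \<in> P" "al \<noteq> be"
    "\<And>\<rho>. \<rho> \<in> P \<Longrightarrow> \<exists>a b. 0 \<le> a \<and> 0 \<le> b \<and> \<rho> = a *\<^sub>R al + b *\<^sub>R be"
proof -
  have "\<not> card P \<le> Suc 0"
    using two_le_card_P by simp
  then obtain a0 b0 where a0: "a0 \<in> P" and b0: "b0 \<in> P" and "a0 \<noteq> b0"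
    using card_le_Suc0_iff_eq[OF finite_P] by blast
  define z where "z = orth_comp a0 b0"
  define r where "r \<nu> = (\<nu> \<bullet> z) / height \<nu>" for \<nu>
  have "r a0 = 0"
    unfolding r_def z_def by simp
  moreover have "r b0 > 0"
    using orth_comp_inner_pos[OF nonparallel[OF a0 b0 \<open>a0 \<noteq> b0\<close>]] height_pos[OF b0]
    unfolding r_def z_def by (simp add: inner_commute)
  moreover define al be where "al = arg_min_on r P" and "be = arg_min_on (\<lambda>\<nu>. - r \<nu>) P"
  moreover have P: "finite P" "P \<noteq> {}"
    using finite_P a0 by auto
  ultimately have al: "al \<in> P" "\<And>\<nu>. \<nu> \<in> P \<Longrightarrow> r al \<le> r \<nu>"
    and be: "be \<in> P" "\<And>\<nu>. \<nu> \<in> P \<Longrightarrow> r \<nu> \<le> r be"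
    and "r al < r be"
    using arg_min_if_finite[OF P, of r] arg_min_if_finite[OF P, of "\<lambda>\<nu>. - r \<nu>"] a0 b0
    by (auto simp: not_less) (smt (verit))
  moreover hence "al \<noteq> be"
    by auto
  ultimately show thesis
    using that cone_between[of al be] unfolding r_def by blast
qed

lemma reflection_in_P:
  assumes s: "s \<in> P" and t: "t \<in> P" and st: "s \<noteq> t"
    and cone: "\<And>\<rho>. \<rho> \<in> P \<Longrightarrow> \<exists>a b. 0 \<le> a \<and> 0 \<le> b \<and> \<rho> = a *\<^sub>R s + b *\<^sub>R t"
    and e: "e \<in> P" and es: "e \<noteq> s" and k: "e \<bullet> coroot s = of_int k" "0 < k"
  shows "refl s e \<in> P" and "height (refl s e) < height e"
proof -
  have refl_eq: "refl s e = e - of_int k *\<^sub>R s"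
    unfolding refl_def k ..
  show "height (refl s e) < height e"
    using k(2) height_pos[OF s] unfolding refl_eq height_def by (simp add: inner_diff_left)
  show "refl s e \<in> P"
  proof (rule ccontr)
    assume "refl s e \<notin> P"
    hence "- refl s e \<in> P"
      using P_or_uminus root_system_refl[OF root_system] s e P_subset by blast
    then obtain a' b' where "0 \<le> b'" "- refl s e = a' *\<^sub>R s + b' *\<^sub>R t"
      using cone by blast
    moreover obtain a b where "0 \<le> a" "0 \<le> b" "e = a *\<^sub>R s + b *\<^sub>R t"
      using cone[OF e] by blast
    ultimately have "(b + b') *\<^sub>R t = (of_int k - a - a') *\<^sub>R s" "0 \<le> b + b'"
      unfolding refl_eq by (auto simp: algebra_simps)
    hence "b + b' = 0"
      using nonparallel[OF s t st] by (metis add_diff_cancel_left' diff_zero scaleR_scaleR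
          field_class.field_divide_inverse inverse_eq_divide mult.commute nonzero_divide_eq_eq scaleR_one)
    hence "e = a *\<^sub>R s"
      using \<open>0 \<le> b\<close> \<open>0 \<le> b'\<close> \<open>e = a *\<^sub>R s + b *\<^sub>R t\<close> by simp
    hence "a = 1"
      using root_system_scaleR[OF root_system, of s a] s e P_subset \<open>0 \<le> a\<close> by auto
    thus False
      using es \<open>e = a *\<^sub>R s\<close> by simp
  qed
qed

lemma level_reflection:
  assumes s: "s \<in> P" and e: "e \<in> P" and \<rho>: "refl s e \<in> P"
    and k: "s \<bullet> coroot e = of_int k" "0 < k"
  shows "n e = n (refl s e) + k * n s"
proof -
  have rel: "\<mu> \<bullet> coroot e = \<mu> \<bullet> coroot (refl s e) + of_int k * (\<mu> \<bullet> coroot s)" for \<mu>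
    using inner_coroot_refl[OF nonzero[OF s] nonzero[OF e], of \<mu>] k(1) by simp
  have "of_int k * of_int (n s) < of_int k * (x \<bullet> coroot s)"
    "of_int k * (y \<bullet> coroot s) < of_int k * of_int (n s)"
    using above[OF s] below[OF s] k(2) by simp_all
  hence "of_int (n (refl s e) + k * n s) < x \<bullet> coroot e"
    "y \<bullet> coroot e < of_int (n (refl s e) + k * n s)"
    using rel[of x] rel[of y] above[OF \<rho>] below[OF \<rho>] by simp_all
  hence "of_int (n (refl s e) + k * n s) < (of_int (n e + 1) :: real)"
    "(of_int (n e - 1) :: real) < of_int (n (refl s e) + k * n s)"
    using above[OF e] below[OF e] by simp_all
  hence "n (refl s e) + k * n s < n e + 1" "n e - 1 < n (refl s e) + k * n s"
    by (simp_all only: of_int_less_iff)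
  thus ?thesis
    by linarith
qed

lemma reflection_step:
  assumes al: "al \<in> P" and be: "be \<in> P" and ne: "al \<noteq> be"
    and cone: "\<And>\<rho>. \<rho> \<in> P \<Longrightarrow> \<exists>a b. 0 \<le> a \<and> 0 \<le> b \<and> \<rho> = a *\<^sub>R al + b *\<^sub>R be"
    and e: "e \<in> P" "e \<notin> {al, be}"
  obtains s k where "s \<in> {al, be}" "refl s e \<in> P" "height (refl s e) < height e"
    "s \<bullet> coroot e = of_int k" "n e = n (refl s e) + k * n s"
proof -
  have cone': "\<exists>a b. 0 \<le> a \<and> 0 \<le> b \<and> \<rho> = a *\<^sub>R be + b *\<^sub>R al" if "\<rho> \<in> P" for \<rho>
    using cone[OF that] by (metis add.commute)
  obtain a b where ab: "0 \<le> a" "0 \<le> b" "e = a *\<^sub>R al + b *\<^sub>R be"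
    using cone[OF e(1)] by blast
  have "0 < e \<bullet> e"
    using nonzero[OF e(1)] by simp
  also have "e \<bullet> e = a * (e \<bullet> al) + b * (e \<bullet> be)"
    by (subst (2) ab(3)) (simp add: inner_add_right)
  finally have "0 < e \<bullet> al \<or> 0 < e \<bullet> be"
    using ab(1,2) by (meson add_nonpos_nonpos mult_nonneg_nonpos not_le)
  then obtain s where s: "s \<in> {al, be}" "0 < e \<bullet> s"
    by blast
  have sP: "s \<in> P"
    using s(1) al be by blast
  obtain k where k: "e \<bullet> coroot s = of_int k" "0 < k"
    using root_system_inner_coroot_pos[OF root_system _ _ s(2)] e(1) sP P_subset by blast
  obtain k' where k': "s \<bullet> coroot e = of_int k'" "0 < k'"
    using root_system_inner_coroot_pos[OF root_system, of s e] s(2) e(1) sP P_subset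
    by (auto simp: inner_commute)
  have "refl s e \<in> P \<and> height (refl s e) < height e"
    using s(1) reflection_in_P[OF al be ne cone e(1), of k] reflection_in_P[OF be al ne[symmetric] cone' e(1), of k]
      k e(2) by auto
  thus thesis
    using that s(1) k' level_reflection[OF sP e(1) _ k'] by blast
qed

lemma concurrent:
  obtains v where "\<And>e. e \<in> P \<Longrightarrow> v \<bullet> coroot e = of_int (n e)"
proof -
  obtain al be where al: "al \<in> P" and be: "be \<in> P" and ne: "al \<noteq> be"
    and cone: "\<And>\<rho>. \<rho> \<in> P \<Longrightarrow> \<exists>a b. 0 \<le> a \<and> 0 \<le> b \<and> \<rho> = a *\<^sub>R al + b *\<^sub>R be"
    using cone_generators by blast
  obtain v where "v \<bullet> al = of_int (n al) * (al \<bullet> al) / 2" "v \<bullet> be = of_int (n be) * (be \<bullet> be) / 2"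
    using exists_inner_eq_pair[OF nonparallel[OF al be ne] nonzero[OF al]] by blast
  hence gen: "v \<bullet> coroot al = of_int (n al)" "v \<bullet> coroot be = of_int (n be)"
    using nonzero[OF al] nonzero[OF be] unfolding coroot_def by (auto simp: field_simps)
  have "v \<bullet> coroot e = of_int (n e)" if "e \<in> P" for e
    using that
  proof (induction "card {\<tau>\<in>P. height \<tau> < height e}" arbitrary: e rule: less_induct)
    case (less e)
    show ?case
    proof (cases "e \<in> {al, be}")
      case True
      thus ?thesis using gen by auto
    next
      case False
      obtain s k where s: "s \<in> {al, be}" "refl s e \<in> P" "height (refl s e) < height e"
        "s \<bullet> coroot e = of_int k" "n e = n (refl s e) + k * n s"
        by (rule reflection_step[OF al be ne cone less.prems False])
      have "{\<tau>\<in>P. height \<tau> < height (refl s e)} \<subset> {\<tau>\<in>P. height \<tau> < height e}"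
        using s(2,3) by auto
      hence "card {\<tau>\<in>P. height \<tau> < height (refl s e)} < card {\<tau>\<in>P. height \<tau> < height e}"
        using finite_P by (intro psubset_card_mono) auto
      hence "v \<bullet> coroot (refl s e) = of_int (n (refl s e))"
        using less.hyps s(2) by blast
      moreover have "s \<in> P" "v \<bullet> coroot s = of_int (n s)"
        using s(1) al be gen by auto
      ultimately show ?thesis
        using inner_coroot_refl[OF nonzero[OF \<open>s \<in> P\<close>] nonzero[OF less.prems], of v] s(4,5)
        by (simp add: algebra_simps)
    qed
  qed
  thus thesis
    using that by blast
qed

lemma Inter_hyp_eq:
  assumes a: "a \<in> P" and b: "b \<in> P" and ne: "a \<noteq> b"
  shows "(\<Inter>e\<in>P. hyp e (n e)) = hyp a (n a) \<inter> hyp b (n b)"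
    and "aff_dim (hyp a (n a) \<inter> hyp b (n b)) = int DIM('a) - 2"
proof -
  obtain v where v: "\<And>e. e \<in> P \<Longrightarrow> v \<bullet> coroot e = of_int (n e)"
    using concurrent by blast
  have np: "\<forall>c. b \<noteq> c *\<^sub>R a"
    using nonparallel[OF a b ne] .
  have "P \<subseteq> span {a, b}"
    using dim2_subset_span_pair[OF dim _ _ np nonzero[OF a]] a b P_subset by blast
  thus "(\<Inter>e\<in>P. hyp e (n e)) = hyp a (n a) \<inter> hyp b (n b)"
    using Inter_hyp_eq_pair[OF a b _ v] by blast
  show "aff_dim (hyp a (n a) \<inter> hyp b (n b)) = int DIM('a) - 2"
    using aff_dim_hyp_Int_hyp[OF np nonzero[OF a], of v "n a" "n b"] v[OF a] v[OF b] by (simp add: hyp_def)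
qed

end

lemma (in alcove_chain) window_strips:
  assumes tq: "t + q \<le> m" and inj: "inj_on \<beta> {t..<t+q}"
    and window: "\<beta> ` {t..<t+q} = Q \<inter> pos_roots R D"
    and Q: "root_system Q" "dim Q = 2" "Q \<subseteq> R" and D: "simple_roots R D"
    and x: "x \<in> As t" and y: "y \<in> As (t + q)"
  shows "rank2_strips Q (Q \<inter> pos_roots R D) (alcove_level (As t)) x y"
proof (unfold_locales)
  fix \<rho> assume "\<rho> \<in> Q"
  thus "\<rho> \<in> Q \<inter> pos_roots R D \<or> - \<rho> \<in> Q \<inter> pos_roots R D"
    using pos_roots_or_uminus[OF root_system D] Q root_system_uminus[OF Q(1)] by blast
next
  fix e assume e: "e \<in> Q \<inter> pos_roots R D"
  then obtain i where i: "i \<in> {t..<t+q}" "e = \<beta> i"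
    using window by blast
  have eR: "e \<in> R"
    using e Q(3) by blast
  show "of_int (alcove_level (As t) e) < x \<bullet> coroot e \<and> x \<bullet> coroot e < of_int (alcove_level (As t) e) + 1"
    using alcove_level_bounds[OF alcove eR x] tq by simp
  have "alcove_level (As (t + q)) e = alcove_level (As t) e - 1"
    using level_window[OF tq inj i(1)] e i(2) by simp
  thus "of_int (alcove_level (As t) e) - 1 < y \<bullet> coroot e \<and> y \<bullet> coroot e < of_int (alcove_level (As t) e)"
    using alcove_level_bounds[OF alcove eR y] tq by simp
qed (use Q in auto)

theorem lemma3p5:
  fixes \<Phi> \<Delta> \<Phi>' :: "'a::euclidean_space set"
    and lam :: 'a and \<beta> :: "nat \<Rightarrow> 'a" and m t q :: nat
  assumes "root_system \<Phi>" and "span \<Phi> = UNIV" and "irreducible_rs \<Phi>"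
    and "simple_roots \<Phi> \<Delta>"
    and "dominant \<Phi> \<Delta> lam"
    and "lambda_chain \<Phi> \<Delta> lam \<beta> m"
    and "t + q \<le> m"
    and "\<Phi>' \<subseteq> \<Phi>" and "root_system \<Phi>'" and "rank \<Phi>' = 2"
    and "inj_on \<beta> {t..<t+q}"
    and "\<beta> ` {t..<t+q} = \<Phi>' \<inter> pos_roots \<Phi> \<Delta>"
  shows "aff_dim (\<Inter>i\<in>{t..<t+q}. hyp (\<beta> i) (- int (lcount \<beta> i))) = int DIM('a) - 2
     \<and> (\<Inter>i\<in>{t..<t+q}. hyp (\<beta> i) (- int (lcount \<beta> i)))
         = hyp (\<beta> t) (- int (lcount \<beta> t)) \<inter> hyp (\<beta> (t+q-1)) (- int (lcount \<beta> (t+q-1)))"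
proof -
  let ?W = "{t..<t+q}" and ?P = "\<Phi>' \<inter> pos_roots \<Phi> \<Delta>"
  have dim: "dim \<Phi>' = 2"
    using assms(10) unfolding rank_def dim_span .
  then obtain \<rho> where "\<rho> \<in> \<Phi>'"
    by fastforce
  hence "?P \<noteq> {}"
    using pos_roots_or_uminus[OF assms(1,4), of \<rho>] root_system_uminus[OF assms(9)] assms(8) by blast
  hence "0 < q"
    using assms(12) by (cases q) auto
  then obtain As where "alcove_chain \<Phi> \<Delta> lam \<beta> m As"
    using lambda_chain_alcove_chain[OF assms(6,1,5)] assms(7) by auto
  then interpret chain: alcove_chain \<Phi> \<Delta> lam \<beta> m As .
  obtain x y where "x \<in> As t" "y \<in> As (t + q)"
    using alcove_nonempty[OF chain.alcove] assms(7) by (metis all_not_in_conv le_add1 le_trans)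
  then interpret strips: rank2_strips \<Phi>' ?P "alcove_level (As t)" x y
    using chain.window_strips[OF assms(7,11,12,9) dim assms(8,4)] by blast
  have level: "- int (lcount \<beta> i) = alcove_level (As t) (\<beta> i)" if "i \<in> ?W" for i
  proof -
    have "\<beta> i \<in> pos_roots \<Phi> \<Delta>"
      using assms(12) that by blast
    thus ?thesis
      using chain.level_window(1)[OF assms(7,11) that] by simp
  qed
  hence inter: "(\<Inter>i\<in>?W. hyp (\<beta> i) (- int (lcount \<beta> i))) = (\<Inter>e\<in>?P. hyp e (alcove_level (As t) e))"
    unfolding assms(12)[symmetric] by simp
  have "2 \<le> q"
    using strips.two_le_card_P card_image[OF assms(11)] assms(12) by simp
  hence ends: "t \<in> ?W" "t + q - 1 \<in> ?W" "\<beta> t \<noteq> \<beta> (t + q - 1)"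
    using inj_on_eq_iff[OF assms(11)] by auto
  hence "\<beta> t \<in> ?P" "\<beta> (t + q - 1) \<in> ?P"
    using assms(12) by blast+
  thus ?thesis
    using inter strips.Inter_hyp_eq[OF _ _ ends(3)] level[OF ends(1)] level[OF ends(2)] by simp
qed

end
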